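(* Let $S=S_1+S_2$ be the gluing of affine semigroups $S_1,S_2\subset\mathbb N^r$ along $\alpha$. Fix $j\in\{1,2\}$ and $b,b'\in S_j$. Then $b-b'\in S_j$ if and only if $b-b'\in S$.
   Context: $S=S_1+S_2$ is the gluing of $S_1$ and $S_2$ if there is $\alpha\in S_1\cap S_2$ with $\mathbb Z S_1\cap\mathbb Z S_2=\mathbb Z\alpha$, where $\mathbb Z S_j$ is the subgroup of $\mathbb Z^r$ generated by $S_j$. *)

theory Defs
  imports "HOL-Analysis.Finite_Cartesian_Product"
begin

text \<open>Points of Z^r are vectors of type int^'n (r = CARD('n)).\<close>

definition natpts :: "(int ^ 'n) set" where
  "natpts = {v. \<forall>i. 0 \<le> v $ i}"

inductive_set monoid_gen :: "'a::monoid_add set \<Rightarrow> 'a set" for A where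
  zero: "0 \<in> monoid_gen A"
| add: "a \<in> A \<Longrightarrow> x \<in> monoid_gen A \<Longrightarrow> a + x \<in> monoid_gen A"

inductive_set group_gen :: "'a::ab_group_add set \<Rightarrow> 'a set" for A where
  zero: "0 \<in> group_gen A"
| add: "a \<in> A \<Longrightarrow> x \<in> group_gen A \<Longrightarrow> a + x \<in> group_gen A"
| sub: "a \<in> A \<Longrightarrow> x \<in> group_gen A \<Longrightarrow> x - a \<in> group_gen A"

definition affine_semigroup :: "(int ^ 'n) set \<Rightarrow> bool" where
  "affine_semigroup S \<longleftrightarrow> (\<exists>A. finite A \<and> A \<subseteq> natpts \<and> S = monoid_gen A)"

definition gluing :: "(int ^ 'n) set \<Rightarrow> (int ^ 'n) set \<Rightarrow> (int ^ 'n) set \<Rightarrow> int ^ 'n \<Rightarrow> bool" where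
  "gluing S S1 S2 \<alpha> \<longleftrightarrow>
     S = {x + y | x y. x \<in> S1 \<and> y \<in> S2} \<and> \<alpha> \<in> S1 \<inter> S2 \<and>
     group_gen S1 \<inter> group_gen S2 = group_gen {\<alpha>}"

end

theory Submission
  imports Defs
begin

text \<open>If \<open>b - b' = x + y\<close> with \<open>x \<in> S\<^sub>1\<close>, \<open>y \<in> S\<^sub>2\<close>, then
  \<open>y = b - b' - x\<close> lies in \<open>\<int>S\<^sub>1 \<inter> \<int>S\<^sub>2 = \<int>\<alpha>\<close>, so \<open>y = k\<alpha>\<close>. For \<open>k \<ge> 0\<close> this puts \<open>y\<close>,
  hence \<open>b - b'\<close>, in \<open>S\<^sub>1\<close>; for \<open>k < 0\<close> both \<open>y\<close> and \<open>-y\<close> are nonnegative vectors, so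
  \<open>y = 0\<close>.\<close>

lemma monoid_gen_add:
  assumes "x \<in> monoid_gen A" and "y \<in> monoid_gen A"
  shows "x + y \<in> monoid_gen A"
  using assms
proof (induction x rule: monoid_gen.induct)
  case zero
  then show ?case by simp
next
  case (add a x)
  then have "a + (x + y) \<in> monoid_gen A" by (simp add: monoid_gen.add)
  then show ?case by (simp add: add.assoc)
qed

lemma monoid_gen_of_nat_mult:
  fixes a :: "'a::semiring_1"
  assumes "a \<in> monoid_gen A"
  shows "of_nat n * a \<in> monoid_gen A"
proof (induction n)
  case 0
  then show ?case by (simp add: monoid_gen.zero)
next
  case (Suc n)
  then show ?case using monoid_gen_add[OF assms] by (simp add: distrib_right)
qed

lemma monoid_gen_subset_natpts:
  assumes "A \<subseteq> natpts"
  shows "monoid_gen A \<subseteq> natpts"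
proof
  fix x assume "x \<in> monoid_gen A"
  then show "x \<in> natpts"
  proof (induction x rule: monoid_gen.induct)
    case zero
    then show ?case by (simp add: natpts_def)
  next
    case (add a x)
    then show ?case using assms by (force simp: natpts_def)
  qed
qed

lemma natpts_uminus_eq_zero:
  assumes "y \<in> natpts" and "- y \<in> natpts"
  shows "y = 0"
  using assms by (simp add: natpts_def vec_eq_iff order_antisym)

lemma group_gen_add_diff:
  assumes "y \<in> group_gen A" and "x \<in> group_gen A"
  shows "x + y \<in> group_gen A \<and> x - y \<in> group_gen A"
  using assms
proof (induction y arbitrary: x rule: group_gen.induct)
  case zero
  then show ?case by simp
next
  case (add a y)
  then have "a + (x + y) \<in> group_gen A" "(x - y) - a \<in> group_gen A"
    by (simp_all add: group_gen.add group_gen.sub)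
  then show ?case by (simp add: algebra_simps)
next
  case (sub a y)
  then have "(x + y) - a \<in> group_gen A" "a + (x - y) \<in> group_gen A"
    by (simp_all add: group_gen.add group_gen.sub)
  then show ?case by (simp add: algebra_simps)
qed

lemma group_gen_diff:
  "x \<in> group_gen A \<Longrightarrow> y \<in> group_gen A \<Longrightarrow> x - y \<in> group_gen A"
  using group_gen_add_diff by blast

lemma subset_group_gen: "A \<subseteq> group_gen A"
  using group_gen.add[OF _ group_gen.zero] by fastforce

lemma group_gen_singleton:
  fixes \<alpha> :: "'a::ring_1"
  assumes "y \<in> group_gen {\<alpha>}"
  shows "\<exists>k. y = of_int k * \<alpha>"
  using assms
proof (induction y rule: group_gen.induct)
  case zero
  show ?case by (intro exI[of _ 0]) simp
next
  case (add a y)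
  then obtain k where "y = of_int k * \<alpha>" by blast
  with add.hyps have "a + y = of_int (k + 1) * \<alpha>" by (simp add: algebra_simps)
  then show ?case by blast
next
  case (sub a y)
  then obtain k where "y = of_int k * \<alpha>" by blast
  with sub.hyps have "y - a = of_int (k - 1) * \<alpha>" by (simp add: algebra_simps)
  then show ?case by blast
qed

lemma diff_mem_monoid_gen_if_glued:
  fixes \<alpha> b b' x y :: "int ^ 'n"
  assumes A: "A \<subseteq> natpts" and U: "U \<subseteq> natpts"
    and \<alpha>: "\<alpha> \<in> monoid_gen A"
    and glue: "group_gen (monoid_gen A) \<inter> group_gen U = group_gen {\<alpha>}"
    and b: "b \<in> monoid_gen A" "b' \<in> monoid_gen A"
    and x: "x \<in> monoid_gen A" and y: "y \<in> U" and sum: "b - b' = x + y"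
  shows "b - b' \<in> monoid_gen A"
proof -
  have "y = (b - x) - b'" using sum by (simp add: algebra_simps)
  also have "\<dots> \<in> group_gen (monoid_gen A)"
    using b x subset_group_gen by (blast intro: group_gen_diff)
  finally have "y \<in> group_gen {\<alpha>}"
    using y subset_group_gen glue by blast
  then obtain k where k: "y = of_int k * \<alpha>"
    using group_gen_singleton by blast
  have "y \<in> monoid_gen A"
  proof (cases "k \<ge> 0")
    case True
    then have "y = of_nat (nat k) * \<alpha>" using k by simp
    then show ?thesis using monoid_gen_of_nat_mult[OF \<alpha>] by simp
  next
    case False
    then have "- y = of_nat (nat (- k)) * \<alpha>" using k by simp
    then have "- y \<in> natpts"
      using monoid_gen_of_nat_mult[OF \<alpha>] monoid_gen_subset_natpts[OF A] by auto
    then have "y = 0" using natpts_uminus_eq_zero y U by blast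
    then show ?thesis by (simp add: monoid_gen.zero)
  qed
  then show ?thesis using sum monoid_gen_add[OF x] by simp
qed

lemma gluing_commute: "gluing S S1 S2 \<alpha> \<Longrightarrow> gluing S S2 S1 \<alpha>"
  unfolding gluing_def by (auto intro: add.commute)

lemma diff_mem_gluing_iff:
  assumes "affine_semigroup S1" and "affine_semigroup S2" and glue: "gluing S S1 S2 \<alpha>"
    and b: "b \<in> S1" "b' \<in> S1"
  shows "b - b' \<in> S1 \<longleftrightarrow> b - b' \<in> S"
proof
  have "0 \<in> S2"
    using assms(2) by (auto simp: affine_semigroup_def monoid_gen.zero)
  then show "b - b' \<in> S1 \<Longrightarrow> b - b' \<in> S"
    using glue unfolding gluing_def by force
next
  obtain A where A: "A \<subseteq> natpts" "S1 = monoid_gen A"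
    using assms(1) by (auto simp: affine_semigroup_def)
  have "S2 \<subseteq> natpts"
    using assms(2) monoid_gen_subset_natpts by (auto simp: affine_semigroup_def)
  moreover assume "b - b' \<in> S"
  ultimately show "b - b' \<in> S1"
    using glue b A diff_mem_monoid_gen_if_glued[of A S2 \<alpha> b b']
    unfolding gluing_def by blast
qed

theorem lemma3p5:
  fixes S S1 S2 :: "(int ^ 'n) set" and \<alpha> :: "int ^ 'n" and j :: nat and b b' :: "int ^ 'n"
  assumes "affine_semigroup S1" and "affine_semigroup S2"
    and "gluing S S1 S2 \<alpha>"
    and "j \<in> {1, 2}"
    and "b \<in> (if j = 1 then S1 else S2)" and "b' \<in> (if j = 1 then S1 else S2)"
  shows "b - b' \<in> (if j = 1 then S1 else S2) \<longleftrightarrow> b - b' \<in> S"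
proof (cases "j = 1")
  case True
  then show ?thesis using assms diff_mem_gluing_iff by simp
next
  case False
  then show ?thesis
    using assms gluing_commute diff_mem_gluing_iff[of S2 S1 S \<alpha> b b'] by auto
qed

end
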